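(* In Setting B, suppose Assumptions B1 and B2 hold. Then for any $t\in[K]$, $x\in X$, $z\in Z$, $$(1-\beta_1)\sum_{j=1}^t\mathbb{E}[\langle x^j-x,u^j\rangle]\sum_{k=j}^t\alpha_k\beta_1^{k-j}\le\frac{n\theta B_x^2}{2}+\frac{\sqrt n(\theta^2+M_x^2)\sum_{j=1}^t\alpha_j^2}{2(1-\beta_1)^2(1-\beta_2)^{1/2}\theta},$$ $$(1-\beta_1)\sum_{j=1}^t\mathbb{E}[\langle z^j-z,w^j\rangle]\sum_{k=j}^t\rho_k\beta_1^{k-j}\ge-\frac{m\theta B_z^2}{2}-\frac{\sqrt m(\theta^2+M_z^2)\sum_{j=1}^t\rho_j^2}{2(1-\beta_1)^2(1-\beta_2)^{1/2}\theta}.$$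
   Context: Setting B. Problem: $\min_{x\in X}\max_{z\in Z}\mathcal L(x,z)$, $\mathcal L(x,z)=\mathbb{E}_\xi[L(x,z;\xi)]$, where $X\subseteq\mathbb{R}^n$ and $Z\subseteq\mathbb{R}^m$ are compact convex sets and $\mathcal L$ is convex in $x\in X$ and concave in $z\in Z$. Vector operations (squares, square roots, division, max) are elementwise with convention $0/0=0$; for $v\ge0$, $\|x\|_v^2=\sum_iv_ix_i^2$ and $\mathrm{proj}_{S,v}(y)=\arg\min_{s\in S}\|s-y\|_v^2$; $\|\cdot\|$ is the Euclidean norm. Algorithm APriAD: fix $K$, $\beta_1,\beta_2\in(0,1)$, $\theta>0$, non-increasing positive step sizes $\{\alpha_k\}_{k=1}^K$ and $\{\rho_k\}_{k=1}^K$. Choose $x^1\in X$, $z^1\in Z$, and $m^0=v^0=\hat v^0=0\in\mathbb{R}^{n+m}$; write any vector $y\in\mathbb{R}^{n+m}$ as $(y_x,y_z)$ with $y_x\in\mathbb{R}^n$, $y_z\in\mathbb{R}^m$. For $k=1,\dots,K$: obtain a random stochastic subgradient $g^k=(u^k,w^k)$ of $\mathcal L$ at $(x^k,z^k)$; set $m^k=\beta_1m^{k-1}+(1-\beta_1)g^k$; $\hat g^k=\big(u^k/\max\{1,\|u^k\|/\theta\},\,w^k/\max\{1,\|w^k\|/\theta\}\big)$; $v^k=\beta_2v^{k-1}+(1-\beta_2)(\hat g^k)^2$; $\hat v^k=\max\{\hat v^{k-1},v^k\}$; $x^{k+1}=\mathrm{proj}_{X,(\hat v^k_x)^{1/2}}\big(x^k-\alpha_km^k_x/(\hat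 v^k_x)^{1/2}\big)$; $z^{k+1}=\mathrm{proj}_{Z,(\hat v^k_z)^{1/2}}\big(z^k+\rho_km^k_z/(\hat v^k_z)^{1/2}\big)$. $\mathcal H^k$ is the history $\{x^1,z^1,\dots,x^k,z^k\}$. Assumption B1: there are $B_x,B_z$ with $\|x_1-x_2\|_\infty\le B_x$ for all $x_1,x_2\in X$ and $\|z_1-z_2\|_\infty\le B_z$ for all $z_1,z_2\in Z$. Assumption B2: there are $M_x,M_z$ such that for all $k\in[K]$: $\mathbb{E}[u^k\mid\mathcal H^k]\in\partial_x\mathcal L(x^k,z^k)$, $\mathbb{E}[\|u^k\|^2]\le M_x^2$, $\mathbb{E}[w^k\mid\mathcal H^k]\in\partial_z\mathcal L(x^k,z^k)$ (superdifferential of the concave function $\mathcal L(x^k,\cdot)$), $\mathbb{E}[\|w^k\|^2]\le M_z^2$. *)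

theory Defs
  imports "HOL-Probability.Probability"
begin

definition wnorm2 :: "real^'d \<Rightarrow> real^'d \<Rightarrow> real" where
  "wnorm2 v y = (\<Sum>i\<in>UNIV. v$i * (y$i)^2)"

definition is_wproj :: "(real^'d) set \<Rightarrow> real^'d \<Rightarrow> real^'d \<Rightarrow> real^'d \<Rightarrow> bool" where
  "is_wproj S v y p \<longleftrightarrow> p \<in> S \<and> (\<forall>s\<in>S. wnorm2 v (p - y) \<le> wnorm2 v (s - y))"

definition clip :: "real \<Rightarrow> real^'d \<Rightarrow> real^'d" where
  "clip \<theta> u = (1 / max 1 (norm u / \<theta>)) *\<^sub>R u"

primrec amom :: "real \<Rightarrow> (nat \<Rightarrow> real^'d) \<Rightarrow> nat \<Rightarrow> real^'d" where
  "amom b g 0 = 0"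
| "amom b g (Suc k) = b *\<^sub>R amom b g k + (1 - b) *\<^sub>R g (Suc k)"

primrec avar :: "real \<Rightarrow> real \<Rightarrow> (nat \<Rightarrow> real^'d) \<Rightarrow> nat \<Rightarrow> real^'d" where
  "avar b \<theta> g 0 = 0"
| "avar b \<theta> g (Suc k) = (\<chi> i. b * (avar b \<theta> g k $ i) + (1 - b) * ((clip \<theta> (g (Suc k))) $ i)^2)"

primrec avhat :: "real \<Rightarrow> real \<Rightarrow> (nat \<Rightarrow> real^'d) \<Rightarrow> nat \<Rightarrow> real^'d" where
  "avhat b \<theta> g 0 = 0"
| "avhat b \<theta> g (Suc k) = (\<chi> i. max (avhat b \<theta> g k $ i) (avar b \<theta> g (Suc k) $ i))"

definition subdiff_x :: "(real^'n) set \<Rightarrow> (real^'n \<Rightarrow> real^'m \<Rightarrow> real) \<Rightarrow> real^'n \<Rightarrow> real^'m \<Rightarrow> (real^'n) set" where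
  "subdiff_x X L x z = {g. \<forall>x'\<in>X. L x' z \<ge> L x z + g \<bullet> (x' - x)}"

definition superdiff_z :: "(real^'m) set \<Rightarrow> (real^'n \<Rightarrow> real^'m \<Rightarrow> real) \<Rightarrow> real^'n \<Rightarrow> real^'m \<Rightarrow> (real^'m) set" where
  "superdiff_z Z L x z = {g. \<forall>z'\<in>Z. L x z' \<le> L x z + g \<bullet> (z' - z)}"

definition hist_alg :: "'a measure \<Rightarrow> (nat \<Rightarrow> 'a \<Rightarrow> real^'n) \<Rightarrow> (nat \<Rightarrow> 'a \<Rightarrow> real^'m) \<Rightarrow> nat \<Rightarrow> 'a measure" where
  "hist_alg M x z k = sigma (space M)
     ({x j -` A \<inter> space M | j A. j \<in> {1..k} \<and> A \<in> sets borel} \<union>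
      {z j -` B \<inter> space M | j B. j \<in> {1..k} \<and> B \<in> sets borel})"

end

theory Submission
  imports Defs
begin

text \<open>
  The bound holds along every sample path; expectations enter only at the very end. Write
  s_k = sqrt (hat v_k) and m_k for the momentum. The variational inequality of the weighted
  projection, combined with Young's inequality, gives
    2 alpha_k <y_k - x, m_k> \<le> |y_k - x|^2_(s_k) - |y_(k+1) - x|^2_(s_k) + alpha_k^2 |m_k|^2_(1/s_k),
  and since s_k is coordinatewise nondecreasing and bounded by theta, the first two terms
  telescope to at most n theta B^2. Exchanging the order of summation turns the left-hand side
  into the sum of alpha_k times the exponential average (1 - beta) sum_j beta^(k-j) <y_j - x, g_j>
  of the gaps, which equals <y_k - x, m_k> plus a discounted sum of the steps
  <y_j - y_(j+1), m_j>; each step lies in [0, alpha_j |m_j|^2_(1/s_j)], so for non-increasing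
  alpha they cost a further factor beta / (1 - beta). The momentum norms are dominated by the
  gradient norms |g_k|^2_(1/s_k), and clipping gives s_k \<ge> sqrt (1 - beta2) |clip g_k|
  coordinatewise, whence |g_k|^2_(1/s_k) \<le> sqrt n (theta^2 + |g_k|^2) / (theta sqrt (1 - beta2)).

  The ascent
  step for z is the descent step for -w, so the second inequality is the first one for (z, -w).
\<close>

section \<open>Clipping and the moment recursions\<close>

lemma norm_clip_le: "\<theta> > 0 \<Longrightarrow> norm (clip \<theta> u) \<le> \<theta>"
  unfolding clip_def by (auto simp: max_def field_simps)

lemma clip_component_sq_le: "\<theta> > 0 \<Longrightarrow> (clip \<theta> u $ i)\<^sup>2 \<le> \<theta>\<^sup>2"
  using component_le_norm_cart[of "clip \<theta> u" i] norm_clip_le[of \<theta> u]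
  by (intro power2_le_iff_abs_le[THEN iffD2]) auto

lemma clip_component_eq_0_iff: "\<theta> > 0 \<Longrightarrow> clip \<theta> u $ i = 0 \<longleftrightarrow> u $ i = 0"
  unfolding clip_def by auto

lemma clip_uminus: "clip \<theta> (- u) = - clip \<theta> u"
  unfolding clip_def by simp

lemma avar_nonneg: "0 \<le> b \<Longrightarrow> b \<le> 1 \<Longrightarrow> avar b \<theta> g k $ i \<ge> 0"
  by (induction k) auto

lemma avar_le_sq: "0 \<le> b \<Longrightarrow> b \<le> 1 \<Longrightarrow> \<theta> > 0 \<Longrightarrow> avar b \<theta> g k $ i \<le> \<theta>\<^sup>2"
proof (induction k)
  case (Suc k)
  have "b * (avar b \<theta> g k $ i) + (1 - b) * (clip \<theta> (g (Suc k)) $ i)\<^sup>2 \<le> b * \<theta>\<^sup>2 + (1 - b) * \<theta>\<^sup>2"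
    using Suc clip_component_sq_le by (intro add_mono mult_left_mono) auto
  then show ?case by (simp add: algebra_simps)
qed simp

lemma avhat_nonneg: "0 \<le> b \<Longrightarrow> b \<le> 1 \<Longrightarrow> avhat b \<theta> g k $ i \<ge> 0"
  by (induction k) (auto simp: max_def)

lemma avhat_le_sq: "0 \<le> b \<Longrightarrow> b \<le> 1 \<Longrightarrow> \<theta> > 0 \<Longrightarrow> avhat b \<theta> g k $ i \<le> \<theta>\<^sup>2"
  by (induction k) (use avar_le_sq in \<open>auto simp del: avar.simps\<close>)

lemma avhat_mono: "k \<le> k' \<Longrightarrow> avhat b \<theta> g k $ i \<le> avhat b \<theta> g k' $ i"
  by (induction k' rule: dec_induct) (auto intro: order_trans)

lemma avhat_Suc_ge_clip:
  "0 \<le> b \<Longrightarrow> b \<le> 1 \<Longrightarrow> (1 - b) * (clip \<theta> (g (Suc k)) $ i)\<^sup>2 \<le> avhat b \<theta> g (Suc k) $ i"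
  using avar_nonneg[of b \<theta> g k i] by (auto simp: le_max_iff_disj intro!: add_increasing)

lemma amom_component_eq_0:
  assumes "0 < b'" "b' < 1" "\<theta> > 0" "avhat b' \<theta> g k $ i = 0"
  shows "amom b g k $ i = 0"
  using assms(4)
proof (induction k)
  case (Suc k)
  have "avhat b' \<theta> g k $ i = 0" and avar_0: "avar b' \<theta> g (Suc k) $ i = 0"
    using Suc.prems avhat_nonneg[of b' \<theta> g k i] avar_nonneg[of b' \<theta> g "Suc k" i] assms(1,2)
    by (auto simp: max_def split: if_splits simp del: avar.simps)
  moreover have "g (Suc k) $ i = 0"
    using avar_0 avar_nonneg[of b' \<theta> g k i] assms(1-3) clip_component_eq_0_iff
    by (auto simp: add_nonneg_eq_0_iff)
  ultimately show ?case using Suc.IH by simp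
qed simp

lemma avar_uminus: "avar b \<theta> (\<lambda>j. - g j) k = avar b \<theta> g k"
  by (induction k) (simp_all add: clip_uminus)

lemma avhat_uminus: "avhat b \<theta> (\<lambda>j. - g j) k = avhat b \<theta> g k"
  by (induction k) (simp_all add: avar_uminus del: avar.simps)

lemma amom_uminus: "amom b (\<lambda>j. - g j) k = - amom b g k"
  by (induction k) (simp_all add: algebra_simps)

lemma ascent_step_is_descent_step_uminus:
  assumes "is_wproj S (\<chi> i. sqrt (avhat b' \<theta> g k $ i))
    (z + r *\<^sub>R (\<chi> i. amom b g k $ i / sqrt (avhat b' \<theta> g k $ i))) p"
  shows "is_wproj S (\<chi> i. sqrt (avhat b' \<theta> (\<lambda>j. - g j) k $ i))
    (z - r *\<^sub>R (\<chi> i. amom b (\<lambda>j. - g j) k $ i / sqrt (avhat b' \<theta> (\<lambda>j. - g j) k $ i))) p"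
proof -
  have eq: "z - r *\<^sub>R (\<chi> i. (- amom b g k) $ i / sqrt (avhat b' \<theta> g k $ i))
      = z + r *\<^sub>R (\<chi> i. amom b g k $ i / sqrt (avhat b' \<theta> g k $ i))"
    by (simp add: vec_eq_iff)
  show ?thesis unfolding avhat_uminus amom_uminus eq by (rule assms)
qed

section \<open>Weighted norms and weighted projections\<close>

lemma wnorm2_minus_commute: "wnorm2 v (a - b) = wnorm2 v (b - a)"
  unfolding wnorm2_def by (simp add: power2_commute)

lemma wnorm2_nonneg: "(\<And>i. v $ i \<ge> 0) \<Longrightarrow> wnorm2 v y \<ge> 0"
  unfolding wnorm2_def by (simp add: sum_nonneg)

lemma wnorm2_three_point:
  "2 * (\<Sum>i\<in>UNIV. v $ i * (p $ i - y $ i) * (q $ i - p $ i))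
     = wnorm2 v (y - q) - wnorm2 v (p - q) - wnorm2 v (p - y)"
  unfolding wnorm2_def sum_distrib_left sum_subtractf[symmetric]
  by (intro sum.cong) (simp_all add: power2_eq_square algebra_simps)

lemma is_wproj_variational_ineq:
  assumes proj: "is_wproj S v y p" and v: "\<And>i. v $ i \<ge> 0" and "convex S" and q: "q \<in> S"
  shows "(\<Sum>i\<in>UNIV. v $ i * (p $ i - y $ i) * (q $ i - p $ i)) \<ge> 0"
proof (rule ccontr)
  define D where "D = (\<Sum>i\<in>UNIV. v $ i * (p $ i - y $ i) * (q $ i - p $ i))"
  define T where "T = (\<Sum>i\<in>UNIV. v $ i * (q $ i - p $ i)\<^sup>2)"
  assume "\<not> ?thesis"
  then have D_neg: "D < 0" unfolding D_def by simp
  have "T \<ge> 0" unfolding T_def using v by (intro sum_nonneg) auto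
  have p: "p \<in> S" "\<And>s. s \<in> S \<Longrightarrow> wnorm2 v (p - y) \<le> wnorm2 v (s - y)"
    using proj unfolding is_wproj_def by auto
  have segment: "0 \<le> 2 * D + l * T" if l: "0 < l" "l \<le> 1" for l
  proof -
    have "(1 - l) *\<^sub>R p + l *\<^sub>R q \<in> S"
      using \<open>convex S\<close> p q l unfolding convex_def by auto
    then have "wnorm2 v (p - y) \<le> wnorm2 v ((1 - l) *\<^sub>R p + l *\<^sub>R q - y)"
      using p(2) by blast
    also have "wnorm2 v ((1 - l) *\<^sub>R p + l *\<^sub>R q - y) = (\<Sum>i\<in>UNIV. v $ i * (p $ i - y $ i)\<^sup>2
        + l * (2 * (v $ i * (p $ i - y $ i) * (q $ i - p $ i)) + l * (v $ i * (q $ i - p $ i)\<^sup>2)))"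
      unfolding wnorm2_def by (intro sum.cong) (simp_all add: power2_eq_square algebra_simps)
    also have "\<dots> = wnorm2 v (p - y) + l * (2 * D + l * T)"
      unfolding wnorm2_def D_def T_def by (simp add: sum.distrib sum_distrib_left distrib_left)
    finally have "0 \<le> l * (2 * D + l * T)" by simp
    then show ?thesis using l by (simp add: zero_le_mult_iff)
  qed
  show False
  proof (cases "T = 0")
    case True
    then show False using segment[of 1] D_neg by simp
  next
    case False
    define l where "l = min 1 (- D / T)"
    have "0 < l" "l \<le> 1" "l * T \<le> - D"
      unfolding l_def using D_neg \<open>T \<ge> 0\<close> False by (auto simp: min_def field_simps)
    then show False using segment[of l] D_neg by simp
  qed
qed

lemma inner_le_wnorm2_young:
  fixes m d s :: "real^'d" and a :: real
  assumes "a > 0" "\<And>i. s $ i \<ge> 0" "\<And>i. s $ i = 0 \<Longrightarrow> m $ i = 0"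
  shows "2 * a * (m \<bullet> d) \<le> a\<^sup>2 * (\<Sum>i\<in>UNIV. (m $ i)\<^sup>2 / s $ i) + wnorm2 s d"
proof -
  have "2 * a * (m $ i * d $ i) \<le> a\<^sup>2 * ((m $ i)\<^sup>2 / s $ i) + s $ i * (d $ i)\<^sup>2" for i
  proof (cases "s $ i = 0")
    case False
    then have "s $ i > 0" using assms(2)[of i] by simp
    then have "0 \<le> (a * m $ i - s $ i * d $ i)\<^sup>2 / s $ i" by simp
    also have "\<dots> = a\<^sup>2 * ((m $ i)\<^sup>2 / s $ i) + s $ i * (d $ i)\<^sup>2 - 2 * a * (m $ i * d $ i)"
      using \<open>s $ i > 0\<close> by (simp add: field_simps power2_eq_square)
    finally show ?thesis by simp
  qed (use assms(3) in simp)
  then show ?thesis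
    unfolding inner_vec_def wnorm2_def sum_distrib_left sum.distrib[symmetric]
    by (intro sum_mono) simp
qed

lemma sum_abs_le_sqrt_card_norm:
  fixes v :: "real^'d"
  shows "(\<Sum>i\<in>UNIV. \<bar>v $ i\<bar>) \<le> sqrt CARD('d) * norm v"
proof -
  have "(\<Sum>i\<in>UNIV. \<bar>v $ i\<bar> * 1)\<^sup>2 \<le> (\<Sum>i\<in>UNIV. \<bar>v $ i\<bar>\<^sup>2) * (\<Sum>i\<in>(UNIV::'d set). 1\<^sup>2)"
    by (rule Cauchy_Schwarz_ineq_sum)
  also have "(\<Sum>i\<in>UNIV. \<bar>v $ i\<bar>\<^sup>2) = (norm v)\<^sup>2"
    unfolding power2_norm_eq_inner inner_vec_def by (simp add: power2_eq_square)
  finally have "(\<Sum>i\<in>UNIV. \<bar>v $ i\<bar>)\<^sup>2 \<le> (sqrt CARD('d) * norm v)\<^sup>2"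
    by (simp add: power_mult_distrib mult.commute)
  then show ?thesis
    by (rule power2_le_imp_le) simp
qed

lemma sum_triangle_swap:
  fixes c a :: "nat \<Rightarrow> 'a::comm_semiring_0"
  shows "(\<Sum>j=1..t. c j * (\<Sum>k=j..t. a k * f k j)) = (\<Sum>k=1..t. a k * (\<Sum>j=1..k. f k j * c j))"
proof (induction t)
  case (Suc t)
  have "(\<Sum>j=1..Suc t. c j * (\<Sum>k=j..Suc t. a k * f k j))
      = (\<Sum>j=1..Suc t. c j * (\<Sum>k=j..t. a k * f k j)) + a (Suc t) * (\<Sum>j=1..Suc t. f (Suc t) j * c j)"
    by (simp add: sum.distrib sum_distrib_left distrib_left mult_ac)
  then show ?case using Suc.IH by simp
qed simp

lemma half_plus_ratio_le:
  fixes \<beta> :: real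
  assumes "0 \<le> \<beta>" "\<beta> < 1"
  shows "1/2 + \<beta> / (1 - \<beta>) \<le> 1 / (2 * (1 - \<beta>)\<^sup>2)"
proof -
  have "1/2 + \<beta> / (1 - \<beta>) = (1 - \<beta>\<^sup>2) / (2 * (1 - \<beta>)\<^sup>2)"
    using assms by (simp add: divide_simps) (simp add: algebra_simps power2_eq_square)
  also have "\<dots> \<le> 1 / (2 * (1 - \<beta>)\<^sup>2)"
    using assms by (intro divide_right_mono) auto
  finally show ?thesis .
qed

lemma sq_convex_comb_div_le:
  fixes b M G s s' :: real
  assumes "0 \<le> b" "b \<le> 1" "0 \<le> s" "s \<le> s'" "s = 0 \<Longrightarrow> M = 0"
  shows "(b * M + (1 - b) * G)\<^sup>2 / s' \<le> b * (M\<^sup>2 / s) + (1 - b) * (G\<^sup>2 / s')"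
proof (cases "s' = 0")
  case False
  then have "s' > 0" using assms by simp
  have convex_sq: "(b * M + (1 - b) * G)\<^sup>2 \<le> b * M\<^sup>2 + (1 - b) * G\<^sup>2"
  proof -
    have "b * M\<^sup>2 + (1 - b) * G\<^sup>2 - (b * M + (1 - b) * G)\<^sup>2 = b * (1 - b) * (M - G)\<^sup>2"
      by (simp add: power2_eq_square algebra_simps)
    moreover have "b * (1 - b) * (M - G)\<^sup>2 \<ge> 0" using assms by simp
    ultimately show ?thesis by linarith
  qed
  have "(b * M + (1 - b) * G)\<^sup>2 / s' \<le> b * (M\<^sup>2 / s') + (1 - b) * (G\<^sup>2 / s')"
    using divide_right_mono[OF convex_sq, of s'] \<open>s' > 0\<close> by (simp add: add_divide_distrib)
  moreover have "M\<^sup>2 / s' \<le> M\<^sup>2 / s"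
    using assms \<open>s' > 0\<close> by (cases "s = 0") (auto intro: divide_left_mono)
  then have "b * (M\<^sup>2 / s') \<le> b * (M\<^sup>2 / s)" using assms(1) by (rule mult_left_mono)
  ultimately show ?thesis by linarith
qed (use assms in \<open>auto intro: add_nonneg_nonneg mult_nonneg_nonneg\<close>)

lemma max_1_div_mult_le:
  fixes a \<theta> :: real
  assumes "0 \<le> a" "\<theta> > 0"
  shows "max 1 (a / \<theta>) * a \<le> (\<theta>\<^sup>2 + a\<^sup>2) / \<theta>"
proof (cases "a \<le> \<theta>")
  case True
  then have "max 1 (a / \<theta>) = 1" using assms by simp
  moreover have "a * \<theta> \<le> \<theta>\<^sup>2 + a\<^sup>2"
    using True assms by (simp add: power2_eq_square mult_right_mono add_increasing2)
  ultimately show ?thesis using assms by (simp add: field_simps)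
next
  case False
  then show ?thesis using assms by (simp add: max_def field_simps power2_eq_square)
qed

section \<open>A single sample path\<close>

locale apriad_path =
  fixes X :: "(real^'d) set" and \<beta> \<beta>2 \<theta> B :: real and \<alpha> :: "nat \<Rightarrow> real" and K :: nat
    and g y :: "nat \<Rightarrow> real^'d" and x :: "real^'d"
  assumes convex: "convex X"
    and beta: "0 < \<beta>" "\<beta> < 1" and beta2: "0 < \<beta>2" "\<beta>2 < 1" and theta: "\<theta> > 0"
    and alpha_pos: "\<And>k. k \<in> {1..K} \<Longrightarrow> \<alpha> k > 0"
    and alpha_mono: "\<And>k k'. k \<in> {1..K} \<Longrightarrow> k' \<in> {1..K} \<Longrightarrow> k \<le> k' \<Longrightarrow> \<alpha> k' \<le> \<alpha> k"
    and init: "y 1 \<in> X"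
    and step: "\<And>k. k \<in> {1..K} \<Longrightarrow> is_wproj X (\<chi> i. sqrt (avhat \<beta>2 \<theta> g k $ i))
         (y k - \<alpha> k *\<^sub>R (\<chi> i. amom \<beta> g k $ i / sqrt (avhat \<beta>2 \<theta> g k $ i))) (y (Suc k))"
    and coord_diam: "\<And>a b i. a \<in> X \<Longrightarrow> b \<in> X \<Longrightarrow> \<bar>a $ i - b $ i\<bar> \<le> B"
    and comparator: "x \<in> X"
begin

definition scale :: "nat \<Rightarrow> real^'d" where
  "scale k = (\<chi> i. sqrt (avhat \<beta>2 \<theta> g k $ i))"

definition mom :: "nat \<Rightarrow> real^'d" where
  "mom k = amom \<beta> g k"

definition mom_dnorm2 :: "nat \<Rightarrow> real" where
  "mom_dnorm2 k = (\<Sum>i\<in>UNIV. (mom k $ i)\<^sup>2 / scale k $ i)"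

definition grad_dnorm2 :: "nat \<Rightarrow> real" where
  "grad_dnorm2 k = (\<Sum>i\<in>UNIV. (g k $ i)\<^sup>2 / scale k $ i)"

definition gap :: "nat \<Rightarrow> real" where
  "gap j = (y j - x) \<bullet> g j"

definition avg_gap :: "nat \<Rightarrow> real" where
  "avg_gap k = (1 - \<beta>) * (\<Sum>j=1..k. \<beta> ^ (k - j) * gap j)"

definition mom_gap :: "nat \<Rightarrow> real" where
  "mom_gap k = (y k - x) \<bullet> mom k"

definition progress :: "nat \<Rightarrow> real" where
  "progress k = (y k - y (Suc k)) \<bullet> mom k"

text \<open>In closed form, past_progress k = (\<Sum>j<k. \<beta> ^ (k - j) * progress j) and
  past_cost k = (\<Sum>j<k. \<beta> ^ (k - j) * (\<alpha> j)^2 * mom_dnorm2 j).\<close>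
primrec past_progress :: "nat \<Rightarrow> real" where
  "past_progress 0 = 0"
| "past_progress (Suc k) = \<beta> * (past_progress k + progress k)"

primrec past_cost :: "nat \<Rightarrow> real" where
  "past_cost 0 = 0"
| "past_cost (Suc k) = \<beta> * (past_cost k + (\<alpha> k)\<^sup>2 * mom_dnorm2 k)"

lemma scale_nonneg: "scale k $ i \<ge> 0"
  unfolding scale_def using avhat_nonneg[of \<beta>2 \<theta> g k i] beta2 by simp

lemma scale_le: "scale k $ i \<le> \<theta>"
  unfolding scale_def
  using real_sqrt_le_mono[OF avhat_le_sq[of \<beta>2 \<theta> g k i]] beta2 theta by simp

lemma scale_mono: "k \<le> k' \<Longrightarrow> scale k $ i \<le> scale k' $ i"
  unfolding scale_def by (simp add: avhat_mono)

lemma scale_Suc_ge_clip: "sqrt (1 - \<beta>2) * \<bar>clip \<theta> (g (Suc k)) $ i\<bar> \<le> scale (Suc k) $ i"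
  using real_sqrt_le_mono[OF avhat_Suc_ge_clip[of \<beta>2 \<theta> g k i]] beta2
  unfolding scale_def by (simp add: real_sqrt_mult)

text \<open>With x / 0 = 0 this makes scale k $ i * (mom k $ i / scale k $ i) = mom k $ i hold
  in every coordinate, including those where the preconditioner vanishes.\<close>
lemma mom_eq_0_if_scale_eq_0: "scale k $ i = 0 \<Longrightarrow> mom k $ i = 0"
  unfolding scale_def mom_def using amom_component_eq_0[OF beta2 theta] by simp

lemma mom_dnorm2_nonneg: "mom_dnorm2 k \<ge> 0"
  unfolding mom_dnorm2_def using scale_nonneg by (intro sum_nonneg) auto

lemma mom_dnorm2_0: "mom_dnorm2 0 = 0"
  unfolding mom_dnorm2_def mom_def by simp

lemma projection_step: "k \<in> {1..K} \<Longrightarrow>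
    is_wproj X (scale k) (y k - \<alpha> k *\<^sub>R (\<chi> i. mom k $ i / scale k $ i)) (y (Suc k))"
  using step unfolding scale_def mom_def by simp

lemma iterate_in: "k \<in> {1..Suc K} \<Longrightarrow> y k \<in> X"
proof (induction k)
  case (Suc k)
  then show ?case
    using init projection_step[of k] unfolding is_wproj_def by (cases "k = 0") auto
qed simp

lemma norm_iterate_diff_le: "k \<in> {1..Suc K} \<Longrightarrow> norm (y k - x) \<le> CARD('d) * B"
  using norm_le_l1_cart[of "y k - x"] sum_mono[of UNIV "\<lambda>i. \<bar>(y k - x) $ i\<bar>" "\<lambda>_. B"]
    coord_diam[OF iterate_in comparator] by fastforce

lemma projection_step_ineq:
  assumes k: "k \<in> {1..K}" and q: "q \<in> X"
  shows "wnorm2 (scale k) (y (Suc k) - q) + wnorm2 (scale k) (y (Suc k) - y k)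
    \<le> wnorm2 (scale k) (y k - q) + 2 * \<alpha> k * ((q - y (Suc k)) \<bullet> mom k)"
proof -
  let ?s = "scale k" and ?p = "y (Suc k)" and ?v = "y k - \<alpha> k *\<^sub>R (\<chi> i. mom k $ i / scale k $ i)"
  have "0 \<le> (\<Sum>i\<in>UNIV. ?s $ i * (?p $ i - ?v $ i) * (q $ i - ?p $ i))"
    using is_wproj_variational_ineq[OF projection_step[OF k] scale_nonneg convex q] .
  also have "\<dots> = (\<Sum>i\<in>UNIV. ?s $ i * (?p $ i - y k $ i) * (q $ i - ?p $ i))
      + \<alpha> k * ((q - ?p) \<bullet> mom k)"
  proof -
    have "?s $ i * (?p $ i - ?v $ i) * (q $ i - ?p $ i)
        = ?s $ i * (?p $ i - y k $ i) * (q $ i - ?p $ i) + \<alpha> k * ((q $ i - ?p $ i) * mom k $ i)" for i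
      by (cases "?s $ i = 0") (auto simp: mom_eq_0_if_scale_eq_0 field_simps)
    then show ?thesis
      unfolding inner_vec_def sum_distrib_left sum.distrib[symmetric] by simp
  qed
  finally show ?thesis using wnorm2_three_point[of ?s ?p "y k" q] by simp
qed

lemma progress_young:
  assumes k: "k \<in> {1..K}"
  shows "2 * \<alpha> k * progress k \<le> (\<alpha> k)\<^sup>2 * mom_dnorm2 k + wnorm2 (scale k) (y (Suc k) - y k)"
proof -
  have "2 * \<alpha> k * (mom k \<bullet> (y k - y (Suc k)))
      \<le> (\<alpha> k)\<^sup>2 * mom_dnorm2 k + wnorm2 (scale k) (y k - y (Suc k))"
    unfolding mom_dnorm2_def
    by (rule inner_le_wnorm2_young[OF alpha_pos[OF k] scale_nonneg mom_eq_0_if_scale_eq_0])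
  then show ?thesis
    unfolding progress_def using wnorm2_minus_commute[of "scale k" "y k"] by (simp add: inner_commute)
qed

lemma progress_bounds:
  assumes k: "k \<in> {1..K}"
  shows "0 \<le> progress k" "progress k \<le> \<alpha> k * mom_dnorm2 k"
proof -
  have step_le: "wnorm2 (scale k) (y (Suc k) - y k) \<le> \<alpha> k * progress k"
    using projection_step_ineq[OF k iterate_in[of k]] k
    by (simp add: wnorm2_def progress_def wnorm2_nonneg scale_nonneg inner_diff_left)
  have "0 \<le> wnorm2 (scale k) (y (Suc k) - y k)" by (simp add: wnorm2_nonneg scale_nonneg)
  then have "0 \<le> \<alpha> k * progress k" using step_le by linarith
  then show "0 \<le> progress k"
    using alpha_pos[OF k] by (simp add: zero_le_mult_iff)
  have "\<alpha> k * progress k \<le> \<alpha> k * (\<alpha> k * mom_dnorm2 k)"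
    using progress_young[OF k] step_le by (simp add: power2_eq_square)
  then show "progress k \<le> \<alpha> k * mom_dnorm2 k"
    using alpha_pos[OF k] by simp
qed

lemma mom_gap_step:
  assumes k: "k \<in> {1..K}"
  shows "2 * \<alpha> k * mom_gap k
    \<le> wnorm2 (scale k) (y k - x) - wnorm2 (scale k) (y (Suc k) - x) + (\<alpha> k)\<^sup>2 * mom_dnorm2 k"
proof -
  have "2 * \<alpha> k * mom_gap k = 2 * \<alpha> k * progress k - 2 * \<alpha> k * ((x - y (Suc k)) \<bullet> mom k)"
    unfolding progress_def mom_gap_def by (simp add: inner_diff_left algebra_simps)
  then show ?thesis
    using projection_step_ineq[OF k comparator] progress_young[OF k] by linarith
qed

lemma mom_dnorm2_Suc_le: "mom_dnorm2 (Suc k) \<le> \<beta> * mom_dnorm2 k + (1 - \<beta>) * grad_dnorm2 (Suc k)"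
proof -
  have "(mom (Suc k) $ i)\<^sup>2 / scale (Suc k) $ i
      \<le> \<beta> * ((mom k $ i)\<^sup>2 / scale k $ i) + (1 - \<beta>) * ((g (Suc k) $ i)\<^sup>2 / scale (Suc k) $ i)" for i
    unfolding mom_def amom.simps
    using sq_convex_comb_div_le beta scale_nonneg scale_mono[of k "Suc k" i]
      mom_eq_0_if_scale_eq_0[of k i, unfolded mom_def] by simp
  then show ?thesis
    unfolding mom_dnorm2_def grad_dnorm2_def sum_distrib_left sum.distrib[symmetric]
    by (intro sum_mono) simp
qed

text \<open>This is where clipping enters: each (g_i)^2 / scale_i is at most
  max 1 (norm g / \<theta>) * |g_i| / sqrt (1 - \<beta>2).\<close>
lemma grad_dnorm2_Suc_le:
  "grad_dnorm2 (Suc k) \<le> sqrt CARD('d) * (\<theta>\<^sup>2 + (norm (g (Suc k)))\<^sup>2) / (\<theta> * sqrt (1 - \<beta>2))"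
proof -
  define G where "G = g (Suc k)"
  define \<mu> where "\<mu> = max 1 (norm G / \<theta>)"
  define r where "r = sqrt (1 - \<beta>2)"
  have "r > 0" "\<mu> \<ge> 1" unfolding r_def \<mu>_def using beta2 by auto
  have coord: "(G $ i)\<^sup>2 / scale (Suc k) $ i \<le> \<mu> / r * \<bar>G $ i\<bar>" for i
  proof (cases "G $ i = 0")
    case False
    have le: "r * (\<bar>G $ i\<bar> / \<mu>) \<le> scale (Suc k) $ i"
      using scale_Suc_ge_clip[of k i] \<open>\<mu> \<ge> 1\<close>
      unfolding G_def r_def \<mu>_def clip_def by (simp add: abs_divide)
    moreover have pos: "r * (\<bar>G $ i\<bar> / \<mu>) > 0" using \<open>r > 0\<close> \<open>\<mu> \<ge> 1\<close> False by simp
    ultimately have "scale (Suc k) $ i > 0" by linarith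
    then have "(G $ i)\<^sup>2 / scale (Suc k) $ i \<le> (G $ i)\<^sup>2 / (r * (\<bar>G $ i\<bar> / \<mu>))"
      by (rule divide_left_mono[OF le zero_le_power2 mult_pos_pos[OF _ pos]])
    also have "\<dots> = \<mu> / r * \<bar>G $ i\<bar>"
      using \<open>r > 0\<close> \<open>\<mu> \<ge> 1\<close> False by (simp add: field_simps power2_eq_square abs_mult_self_eq)
    finally show ?thesis .
  qed simp
  have "grad_dnorm2 (Suc k) \<le> \<mu> / r * (\<Sum>i\<in>UNIV. \<bar>G $ i\<bar>)"
    unfolding grad_dnorm2_def G_def[symmetric] sum_distrib_left by (intro sum_mono coord)
  also have "\<dots> \<le> \<mu> / r * (sqrt CARD('d) * norm G)"
    using sum_abs_le_sqrt_card_norm[of G] \<open>r > 0\<close> \<open>\<mu> \<ge> 1\<close> by (intro mult_left_mono) auto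
  also have "\<dots> = sqrt CARD('d) * (\<mu> * norm G) / r" by simp
  also have "\<dots> \<le> sqrt CARD('d) * ((\<theta>\<^sup>2 + (norm G)\<^sup>2) / \<theta>) / r"
    unfolding \<mu>_def using max_1_div_mult_le[OF norm_ge_zero theta] \<open>r > 0\<close>
    by (intro divide_right_mono mult_left_mono) auto
  finally show ?thesis unfolding G_def r_def by simp
qed

lemma sum_mom_dnorm2_le_sum_grad_dnorm2:
  "t \<le> K \<Longrightarrow> (\<Sum>k=1..t. (\<alpha> k)\<^sup>2 * mom_dnorm2 k) + \<beta> / (1 - \<beta>) * ((\<alpha> t)\<^sup>2 * mom_dnorm2 t)
     \<le> (\<Sum>k=1..t. (\<alpha> k)\<^sup>2 * grad_dnorm2 k)"
proof (induction t)
  case 0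
  then show ?case using mom_dnorm2_0 by simp
next
  case (Suc t)
  have "(\<alpha> (Suc t))\<^sup>2 * mom_dnorm2 t \<le> (\<alpha> t)\<^sup>2 * mom_dnorm2 t"
  proof (cases "t = 0")
    case False
    then have "\<alpha> (Suc t) \<le> \<alpha> t" "0 < \<alpha> (Suc t)"
      using alpha_mono[of t "Suc t"] alpha_pos[of "Suc t"] Suc.prems by auto
    then show ?thesis using mom_dnorm2_nonneg by (intro mult_right_mono power_mono) auto
  qed (simp add: mom_dnorm2_0)
  then have "\<beta> * ((\<alpha> (Suc t))\<^sup>2 * mom_dnorm2 t) \<le> \<beta> * ((\<alpha> t)\<^sup>2 * mom_dnorm2 t)"
    using beta by (intro mult_left_mono) auto
  moreover have "(\<alpha> (Suc t))\<^sup>2 * mom_dnorm2 (Suc t)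
      \<le> \<beta> * ((\<alpha> (Suc t))\<^sup>2 * mom_dnorm2 t) + (1 - \<beta>) * ((\<alpha> (Suc t))\<^sup>2 * grad_dnorm2 (Suc t))"
    using mult_left_mono[OF mom_dnorm2_Suc_le, of "(\<alpha> (Suc t))\<^sup>2" t] by (simp add: algebra_simps)
  ultimately have "(\<alpha> (Suc t))\<^sup>2 * mom_dnorm2 (Suc t)
      \<le> \<beta> * ((\<alpha> t)\<^sup>2 * mom_dnorm2 t) + (1 - \<beta>) * ((\<alpha> (Suc t))\<^sup>2 * grad_dnorm2 (Suc t))"
    by linarith
  then have "(\<alpha> (Suc t))\<^sup>2 * mom_dnorm2 (Suc t) / (1 - \<beta>)
      \<le> (\<beta> * ((\<alpha> t)\<^sup>2 * mom_dnorm2 t) + (1 - \<beta>) * ((\<alpha> (Suc t))\<^sup>2 * grad_dnorm2 (Suc t))) / (1 - \<beta>)"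
    using beta by (intro divide_right_mono) auto
  also have "\<dots> = \<beta> / (1 - \<beta>) * ((\<alpha> t)\<^sup>2 * mom_dnorm2 t) + (\<alpha> (Suc t))\<^sup>2 * grad_dnorm2 (Suc t)"
    using beta by (simp add: field_simps)
  finally have "(\<alpha> (Suc t))\<^sup>2 * mom_dnorm2 (Suc t) / (1 - \<beta>)
      \<le> \<beta> / (1 - \<beta>) * ((\<alpha> t)\<^sup>2 * mom_dnorm2 t) + (\<alpha> (Suc t))\<^sup>2 * grad_dnorm2 (Suc t)" .
  moreover have "(\<alpha> (Suc t))\<^sup>2 * mom_dnorm2 (Suc t) / (1 - \<beta>)
      = (\<alpha> (Suc t))\<^sup>2 * mom_dnorm2 (Suc t) + \<beta> / (1 - \<beta>) * ((\<alpha> (Suc t))\<^sup>2 * mom_dnorm2 (Suc t))"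
    using beta by (simp add: field_simps)
  ultimately show ?case using Suc by simp
qed

lemma avg_gap_eq: "avg_gap k = mom_gap k + past_progress k"
proof (induction k)
  case 0
  then show ?case unfolding avg_gap_def mom_gap_def mom_def by simp
next
  case (Suc k)
  have "(\<Sum>j=1..k. \<beta> ^ (Suc k - j) * gap j) = \<beta> * (\<Sum>j=1..k. \<beta> ^ (k - j) * gap j)"
    unfolding sum_distrib_left by (intro sum.cong) (auto simp: Suc_diff_le)
  then have "avg_gap (Suc k) = \<beta> * avg_gap k + (1 - \<beta>) * gap (Suc k)"
    unfolding avg_gap_def by (simp add: algebra_simps)
  moreover have "mom_gap (Suc k) = \<beta> * (mom_gap k - progress k) + (1 - \<beta>) * gap (Suc k)"
    unfolding mom_gap_def progress_def gap_def mom_def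
    by (simp add: inner_add_right inner_diff_left algebra_simps)
  ultimately show ?case using Suc.IH by (simp add: algebra_simps)
qed

lemma past_progress_nonneg: "k \<le> Suc K \<Longrightarrow> past_progress k \<ge> 0"
proof (induction k)
  case (Suc k)
  have "progress k \<ge> 0"
    using progress_bounds(1)[of k] Suc.prems by (cases "k = 0") (auto simp: progress_def mom_def)
  then show ?case using Suc beta by simp
qed simp

lemma past_cost_nonneg: "past_cost k \<ge> 0"
  by (induction k) (use beta mom_dnorm2_nonneg in auto)

lemma alpha_past_progress_le: "k \<in> {1..K} \<Longrightarrow> \<alpha> k * past_progress k \<le> past_cost k"
proof (induction k)
  case (Suc k)
  show ?case
  proof (cases "k = 0")
    case True
    then show ?thesis by (simp add: progress_def mom_def mom_dnorm2_0)
  next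
    case False
    then have k: "k \<in> {1..K}" using Suc.prems by auto
    have "\<alpha> (Suc k) \<le> \<alpha> k" "\<alpha> (Suc k) > 0"
      using alpha_mono[of k "Suc k"] alpha_pos Suc.prems k by auto
    moreover have "past_progress k \<ge> 0" using past_progress_nonneg k by auto
    ultimately have "\<alpha> (Suc k) * past_progress k + \<alpha> (Suc k) * progress k
        \<le> \<alpha> k * past_progress k + \<alpha> k * (\<alpha> k * mom_dnorm2 k)"
      using progress_bounds[OF k]
      by (intro add_mono mult_mono mult_right_mono) (auto simp: less_imp_le)
    also have "\<dots> \<le> past_cost k + (\<alpha> k)\<^sup>2 * mom_dnorm2 k"
      using Suc.IH[OF k] by (simp add: power2_eq_square)
    finally have "\<alpha> (Suc k) * (past_progress k + progress k) \<le> past_cost k + (\<alpha> k)\<^sup>2 * mom_dnorm2 k"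
      by (simp only: distrib_left)
    then show ?thesis using mult_left_mono[of _ _ \<beta>] beta by (simp add: mult.left_commute)
  qed
qed simp

lemma sum_past_cost:
  "(\<Sum>k=1..t. past_cost k) + past_cost (Suc t) / (1 - \<beta>)
     = \<beta> / (1 - \<beta>) * (\<Sum>k=1..t. (\<alpha> k)\<^sup>2 * mom_dnorm2 k)"
proof (induction t)
  case (Suc t)
  have "past_cost (Suc t) + (past_cost (Suc (Suc t)) - past_cost (Suc t)) / (1 - \<beta>)
      = \<beta> / (1 - \<beta>) * ((\<alpha> (Suc t))\<^sup>2 * mom_dnorm2 (Suc t))"
    using beta by (simp del: past_cost.simps add: past_cost.simps(2)[of "Suc t"] field_simps)
  then show ?case using Suc.IH by (simp del: past_cost.simps add: diff_divide_distrib algebra_simps)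
qed (simp add: mom_dnorm2_0)

lemma sum_alpha_past_progress_le:
  "t \<le> K \<Longrightarrow> (\<Sum>k=1..t. \<alpha> k * past_progress k) \<le> \<beta> / (1 - \<beta>) * (\<Sum>k=1..t. (\<alpha> k)\<^sup>2 * mom_dnorm2 k)"
  using sum_mono[of "{1..t}" "\<lambda>k. \<alpha> k * past_progress k" past_cost] alpha_past_progress_le
    sum_past_cost[of t] divide_nonneg_pos[OF past_cost_nonneg[of "Suc t"], of "1 - \<beta>"] beta
  by fastforce

lemma sum_wnorm2_telescope:
  assumes "t \<le> K"
  shows "(\<Sum>k=1..t. wnorm2 (scale k) (y k - x) - wnorm2 (scale k) (y (Suc k) - x)) \<le> CARD('d) * \<theta> * B\<^sup>2"
proof -
  have "(\<Sum>k=1..t. wnorm2 (scale k) (y k - x) - wnorm2 (scale k) (y (Suc k) - x))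
      + wnorm2 (scale t) (y (Suc t) - x) \<le> B\<^sup>2 * (\<Sum>i\<in>UNIV. scale t $ i)"
    using assms
  proof (induction t)
    case 0
    then show ?case by (simp add: wnorm2_def scale_def vec_eq_iff)
  next
    case (Suc t)
    have "wnorm2 (scale (Suc t)) (y (Suc t) - x) - wnorm2 (scale t) (y (Suc t) - x)
        = (\<Sum>i\<in>UNIV. (scale (Suc t) $ i - scale t $ i) * (y (Suc t) $ i - x $ i)\<^sup>2)"
      unfolding wnorm2_def by (simp add: sum_subtractf algebra_simps)
    also have "\<dots> \<le> (\<Sum>i\<in>UNIV. (scale (Suc t) $ i - scale t $ i) * B\<^sup>2)"
    proof (intro sum_mono mult_left_mono)
      fix i
      show "(y (Suc t) $ i - x $ i)\<^sup>2 \<le> B\<^sup>2"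
        using coord_diam[OF iterate_in comparator, of "Suc t" i] Suc.prems
        by (intro power2_le_iff_abs_le[THEN iffD2]) auto
    qed (simp add: scale_mono)
    finally show ?case
      using Suc by (simp add: sum_subtractf sum_distrib_left algebra_simps)
  qed
  moreover have "B\<^sup>2 * (\<Sum>i\<in>UNIV. scale t $ i) \<le> B\<^sup>2 * (CARD('d) * \<theta>)"
    using sum_mono[of UNIV "\<lambda>i. scale t $ i" "\<lambda>_. \<theta>"] scale_le by (intro mult_left_mono) auto
  moreover have "wnorm2 (scale t) (y (Suc t) - x) \<ge> 0" by (simp add: wnorm2_nonneg scale_nonneg)
  ultimately show ?thesis by (simp add: algebra_simps)
qed

lemma sum_alpha_mom_gap_le:
  assumes "t \<le> K"
  shows "2 * (\<Sum>k=1..t. \<alpha> k * mom_gap k) \<le> CARD('d) * \<theta> * B\<^sup>2 + (\<Sum>k=1..t. (\<alpha> k)\<^sup>2 * mom_dnorm2 k)"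
proof -
  have "2 * (\<Sum>k=1..t. \<alpha> k * mom_gap k) = (\<Sum>k=1..t. 2 * \<alpha> k * mom_gap k)"
    by (simp add: sum_distrib_left mult.assoc)
  also have "\<dots> \<le> (\<Sum>k=1..t. wnorm2 (scale k) (y k - x) - wnorm2 (scale k) (y (Suc k) - x)
      + (\<alpha> k)\<^sup>2 * mom_dnorm2 k)"
    using assms by (intro sum_mono mom_gap_step) auto
  also have "\<dots> \<le> CARD('d) * \<theta> * B\<^sup>2 + (\<Sum>k=1..t. (\<alpha> k)\<^sup>2 * mom_dnorm2 k)"
    using sum_wnorm2_telescope[OF assms] by (simp add: sum.distrib)
  finally show ?thesis .
qed

lemma sum_mom_dnorm2_le_sum_grad_norm:
  assumes "t \<le> K"
  shows "(\<Sum>k=1..t. (\<alpha> k)\<^sup>2 * mom_dnorm2 k)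
    \<le> sqrt CARD('d) * (\<Sum>k=1..t. (\<alpha> k)\<^sup>2 * (\<theta>\<^sup>2 + (norm (g k))\<^sup>2)) / (\<theta> * sqrt (1 - \<beta>2))"
proof -
  have "(\<Sum>k=1..t. (\<alpha> k)\<^sup>2 * mom_dnorm2 k) \<le> (\<Sum>k=1..t. (\<alpha> k)\<^sup>2 * grad_dnorm2 k)"
  proof -
    have "\<beta> / (1 - \<beta>) * ((\<alpha> t)\<^sup>2 * mom_dnorm2 t) \<ge> 0" using beta mom_dnorm2_nonneg by simp
    then show ?thesis using sum_mom_dnorm2_le_sum_grad_dnorm2[OF assms] by linarith
  qed
  also have "\<dots> \<le> (\<Sum>k=1..t. (\<alpha> k)\<^sup>2 * (sqrt CARD('d) * (\<theta>\<^sup>2 + (norm (g k))\<^sup>2) / (\<theta> * sqrt (1 - \<beta>2))))"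
  proof (intro sum_mono mult_left_mono)
    fix k assume "k \<in> {1..t}"
    then obtain k' where "k = Suc k'" by (cases k) auto
    then show "grad_dnorm2 k \<le> sqrt CARD('d) * (\<theta>\<^sup>2 + (norm (g k))\<^sup>2) / (\<theta> * sqrt (1 - \<beta>2))"
      using grad_dnorm2_Suc_le by simp
  qed simp
  also have "\<dots> = sqrt CARD('d) * (\<Sum>k=1..t. (\<alpha> k)\<^sup>2 * (\<theta>\<^sup>2 + (norm (g k))\<^sup>2)) / (\<theta> * sqrt (1 - \<beta>2))"
    by (simp add: sum_distrib_left sum_divide_distrib mult_ac)
  finally show ?thesis .
qed

theorem weighted_regret_bound:
  assumes "t \<le> K"
  shows "(1 - \<beta>) * (\<Sum>j=1..t. gap j * (\<Sum>k=j..t. \<alpha> k * \<beta> ^ (k - j)))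
    \<le> CARD('d) * \<theta> * B\<^sup>2 / 2 + sqrt CARD('d) * (\<Sum>j=1..t. (\<alpha> j)\<^sup>2 * (\<theta>\<^sup>2 + (norm (g j))\<^sup>2))
        / (2 * (1 - \<beta>)\<^sup>2 * sqrt (1 - \<beta>2) * \<theta>)"
proof -
  define A where "A = (\<Sum>k=1..t. (\<alpha> k)\<^sup>2 * mom_dnorm2 k)"
  define W where "W = sqrt CARD('d) * (\<Sum>j=1..t. (\<alpha> j)\<^sup>2 * (\<theta>\<^sup>2 + (norm (g j))\<^sup>2))"
  have "A \<ge> 0" unfolding A_def using mom_dnorm2_nonneg by (simp add: sum_nonneg)
  have "(1 - \<beta>) * (\<Sum>j=1..t. gap j * (\<Sum>k=j..t. \<alpha> k * \<beta> ^ (k - j))) = (\<Sum>k=1..t. \<alpha> k * avg_gap k)"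
    unfolding avg_gap_def sum_triangle_swap by (simp add: sum_distrib_left mult_ac)
  also have "\<dots> = (\<Sum>k=1..t. \<alpha> k * mom_gap k) + (\<Sum>k=1..t. \<alpha> k * past_progress k)"
    by (simp add: avg_gap_eq distrib_left sum.distrib)
  also have "\<dots> \<le> CARD('d) * \<theta> * B\<^sup>2 / 2 + (1/2 + \<beta> / (1 - \<beta>)) * A"
    using sum_alpha_mom_gap_le[OF assms] sum_alpha_past_progress_le[OF assms]
    unfolding A_def by (simp add: algebra_simps)
  also have "\<dots> \<le> CARD('d) * \<theta> * B\<^sup>2 / 2 + 1 / (2 * (1 - \<beta>)\<^sup>2) * (W / (\<theta> * sqrt (1 - \<beta>2)))"
    using half_plus_ratio_le[of \<beta>] sum_mom_dnorm2_le_sum_grad_norm[OF assms] \<open>A \<ge> 0\<close> beta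
    unfolding A_def W_def by (intro add_left_mono mult_mono) auto
  also have "\<dots> = CARD('d) * \<theta> * B\<^sup>2 / 2 + W / (2 * (1 - \<beta>)\<^sup>2 * sqrt (1 - \<beta>2) * \<theta>)"
    by (simp add: field_simps)
  finally show ?thesis unfolding W_def .
qed

end

section \<open>Taking expectations\<close>

lemma integrable_square_of_nn_integral_le:
  fixes f :: "'a \<Rightarrow> real"
  assumes [measurable]: "f \<in> borel_measurable M"
    and bound: "(\<integral>\<^sup>+ \<omega>. ennreal ((f \<omega>)\<^sup>2) \<partial>M) \<le> ennreal (c\<^sup>2)"
  shows "integrable M (\<lambda>\<omega>. (f \<omega>)\<^sup>2)" "(\<integral>\<omega>. (f \<omega>)\<^sup>2 \<partial>M) \<le> c\<^sup>2"
proof -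
  show int: "integrable M (\<lambda>\<omega>. (f \<omega>)\<^sup>2)"
    unfolding integrable_iff_bounded using bound by (simp add: le_less_trans)
  have "ennreal (\<integral>\<omega>. (f \<omega>)\<^sup>2 \<partial>M) \<le> ennreal (c\<^sup>2)"
    using nn_integral_eq_integral[OF int] bound by simp
  then show "(\<integral>\<omega>. (f \<omega>)\<^sup>2 \<partial>M) \<le> c\<^sup>2" by (simp add: ennreal_le_iff)
qed

lemma (in finite_measure) integrable_inner_of_bounded_square_integrable:
  fixes y g :: "'a \<Rightarrow> real^'d"
  assumes [measurable]: "y \<in> borel_measurable M" "g \<in> borel_measurable M"
    and "\<And>\<omega>. \<omega> \<in> space M \<Longrightarrow> norm (y \<omega> - x) \<le> R" and "integrable M (\<lambda>\<omega>. (norm (g \<omega>))\<^sup>2)"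
  shows "integrable M (\<lambda>\<omega>. (y \<omega> - x) \<bullet> g \<omega>)"
proof (rule Bochner_Integration.integrable_bound)
  show "integrable M (\<lambda>\<omega>. R * norm (g \<omega>))"
    using square_integrable_imp_integrable[of "\<lambda>\<omega>. norm (g \<omega>)"] assms(4) by simp
  show "AE \<omega> in M. norm ((y \<omega> - x) \<bullet> g \<omega>) \<le> norm (R * norm (g \<omega>))"
  proof (rule AE_I2)
    fix \<omega> assume "\<omega> \<in> space M"
    then show "norm ((y \<omega> - x) \<bullet> g \<omega>) \<le> norm (R * norm (g \<omega>))"
      using assms(3) Cauchy_Schwarz_ineq2[of "y \<omega> - x" "g \<omega>"] mult_right_mono[of _ _ "norm (g \<omega>)"]
      by fastforce
  qed
qed simp

lemma (in prob_space) expectation_sum_le_of_pointwise: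
  fixes f h :: "'i \<Rightarrow> 'a \<Rightarrow> real"
  assumes "finite J" "\<And>j. j \<in> J \<Longrightarrow> integrable M (f j)" "\<And>j. j \<in> J \<Longrightarrow> integrable M (h j)"
    and "\<And>\<omega>. \<omega> \<in> space M \<Longrightarrow> (\<Sum>j\<in>J. f j \<omega>) \<le> C + (\<Sum>j\<in>J. h j \<omega>)"
  shows "(\<Sum>j\<in>J. expectation (f j)) \<le> C + (\<Sum>j\<in>J. expectation (h j))"
proof -
  have "(\<Sum>j\<in>J. expectation (f j)) = expectation (\<lambda>\<omega>. \<Sum>j\<in>J. f j \<omega>)"
    using assms(2) by (simp add: Bochner_Integration.integral_sum)
  also have "\<dots> \<le> expectation (\<lambda>\<omega>. C + (\<Sum>j\<in>J. h j \<omega>))"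
    using assms by (intro Bochner_Integration.integral_mono) auto
  also have "\<dots> = C + (\<Sum>j\<in>J. expectation (h j))"
    using assms(3) by (simp add: prob_space Bochner_Integration.integral_sum)
  finally show ?thesis .
qed

theorem expected_weighted_regret_bound:
  fixes M :: "'a measure" and X :: "(real^'d) set" and y g :: "nat \<Rightarrow> 'a \<Rightarrow> real^'d"
    and \<beta> \<beta>2 \<theta> B G :: real and \<alpha> :: "nat \<Rightarrow> real"
  assumes "prob_space M"
    and path: "\<And>\<omega>. \<omega> \<in> space M \<Longrightarrow> apriad_path X \<beta> \<beta>2 \<theta> B \<alpha> K (\<lambda>j. g j \<omega>) (\<lambda>j. y j \<omega>) x"
    and [measurable]: "\<And>j. y j \<in> borel_measurable M" "\<And>j. g j \<in> borel_measurable M"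
    and moment: "\<And>k. k \<in> {1..K} \<Longrightarrow> (\<integral>\<^sup>+ \<omega>. ennreal ((norm (g k \<omega>))\<^sup>2) \<partial>M) \<le> ennreal (G\<^sup>2)"
    and t: "t \<le> K"
  shows "(1 - \<beta>) * (\<Sum>j=1..t. (\<integral>\<omega>. (y j \<omega> - x) \<bullet> g j \<omega> \<partial>M) * (\<Sum>k=j..t. \<alpha> k * \<beta> ^ (k - j)))
    \<le> CARD('d) * \<theta> * B\<^sup>2 / 2
       + sqrt CARD('d) * (\<theta>\<^sup>2 + G\<^sup>2) * (\<Sum>j=1..t. (\<alpha> j)\<^sup>2) / (2 * (1 - \<beta>)\<^sup>2 * sqrt (1 - \<beta>2) * \<theta>)"
proof -
  interpret prob_space M by fact
  obtain \<omega>0 where "\<omega>0 \<in> space M" using not_empty by blast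
  interpret P0: apriad_path X \<beta> \<beta>2 \<theta> B \<alpha> K "\<lambda>j. g j \<omega>0" "\<lambda>j. y j \<omega>0" x by (rule path) fact
  define c where "c = sqrt CARD('d) / (2 * (1 - \<beta>)\<^sup>2 * sqrt (1 - \<beta>2) * \<theta>)"
  have "c \<ge> 0" unfolding c_def using P0.beta2 P0.theta by simp
  note square = integrable_square_of_nn_integral_le[OF _ moment]
  have gap_integrable: "integrable M (\<lambda>\<omega>. (y j \<omega> - x) \<bullet> g j \<omega>)" if j: "j \<in> {1..t}" for j
  proof (rule integrable_inner_of_bounded_square_integrable)
    fix \<omega> assume "\<omega> \<in> space M"
    then interpret P: apriad_path X \<beta> \<beta>2 \<theta> B \<alpha> K "\<lambda>j. g j \<omega>" "\<lambda>j. y j \<omega>" x by (rule path)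
    show "norm (y j \<omega> - x) \<le> CARD('d) * B" using P.norm_iterate_diff_le j t by auto
  qed (use square(1) j t in auto)
  define \<Gamma> where "\<Gamma> j = (\<Sum>k=j..t. \<alpha> k * \<beta> ^ (k - j))" for j
  have "(1 - \<beta>) * (\<Sum>j=1..t. (\<integral>\<omega>. (y j \<omega> - x) \<bullet> g j \<omega> \<partial>M) * \<Gamma> j)
      = (\<Sum>j=1..t. expectation (\<lambda>\<omega>. (1 - \<beta>) * (((y j \<omega> - x) \<bullet> g j \<omega>) * \<Gamma> j)))"
    by (simp add: sum_distrib_left)
  also have "\<dots> \<le> CARD('d) * \<theta> * B\<^sup>2 / 2 + (\<Sum>j=1..t. expectation (\<lambda>\<omega>. c * ((\<alpha> j)\<^sup>2 * (\<theta>\<^sup>2 + (norm (g j \<omega>))\<^sup>2))))"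
  proof (rule expectation_sum_le_of_pointwise)
    fix \<omega> assume "\<omega> \<in> space M"
    then interpret P: apriad_path X \<beta> \<beta>2 \<theta> B \<alpha> K "\<lambda>j. g j \<omega>" "\<lambda>j. y j \<omega>" x by (rule path)
    show "(\<Sum>j=1..t. (1 - \<beta>) * (((y j \<omega> - x) \<bullet> g j \<omega>) * \<Gamma> j))
        \<le> CARD('d) * \<theta> * B\<^sup>2 / 2 + (\<Sum>j=1..t. c * ((\<alpha> j)\<^sup>2 * (\<theta>\<^sup>2 + (norm (g j \<omega>))\<^sup>2)))"
      using P.weighted_regret_bound[OF t] unfolding P.gap_def c_def \<Gamma>_def
      by (simp add: sum_distrib_left sum_divide_distrib)
  qed (use gap_integrable square t in auto)
  also have "\<dots> \<le> CARD('d) * \<theta> * B\<^sup>2 / 2 + (\<Sum>j=1..t. c * ((\<alpha> j)\<^sup>2 * (\<theta>\<^sup>2 + G\<^sup>2)))"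
  proof (intro add_left_mono sum_mono)
    fix j assume "j \<in> {1..t}"
    then have "expectation (\<lambda>\<omega>. (norm (g j \<omega>))\<^sup>2) \<le> G\<^sup>2" "integrable M (\<lambda>\<omega>. (norm (g j \<omega>))\<^sup>2)"
      using square t by auto
    then show "expectation (\<lambda>\<omega>. c * ((\<alpha> j)\<^sup>2 * (\<theta>\<^sup>2 + (norm (g j \<omega>))\<^sup>2))) \<le> c * ((\<alpha> j)\<^sup>2 * (\<theta>\<^sup>2 + G\<^sup>2))"
      using \<open>c \<ge> 0\<close> by (simp add: prob_space mult_left_mono)
  qed
  also have "(\<Sum>j=1..t. c * ((\<alpha> j)\<^sup>2 * (\<theta>\<^sup>2 + G\<^sup>2))) = c * (\<theta>\<^sup>2 + G\<^sup>2) * (\<Sum>j=1..t. (\<alpha> j)\<^sup>2)"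
    by (simp add: sum_distrib_left mult_ac)
  finally show ?thesis unfolding \<Gamma>_def c_def by simp
qed

theorem lemma11:
  fixes M :: "'a measure"
    and X :: "(real^'n) set" and Z :: "(real^'m) set"
    and L :: "real^'n \<Rightarrow> real^'m \<Rightarrow> real"
    and K :: nat and \<beta>1 \<beta>2 \<theta> :: real and \<alpha> \<rho> :: "nat \<Rightarrow> real"
    and x1 :: "real^'n" and z1 :: "real^'m"
    and u :: "nat \<Rightarrow> 'a \<Rightarrow> real^'n" and w :: "nat \<Rightarrow> 'a \<Rightarrow> real^'m"
    and x :: "nat \<Rightarrow> 'a \<Rightarrow> real^'n" and z :: "nat \<Rightarrow> 'a \<Rightarrow> real^'m"
    and Bx Bz Mx Mz :: real
    and t :: nat and xx :: "real^'n" and zz :: "real^'m"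
  assumes prob: "prob_space M"
    and X: "compact X" "convex X" and Z: "compact Z" "convex Z"
    and L_convex: "\<And>z'. z' \<in> Z \<Longrightarrow> convex_on X (\<lambda>x'. L x' z')"
    and L_concave: "\<And>x'. x' \<in> X \<Longrightarrow> convex_on Z (\<lambda>z'. - L x' z')"
    and beta1: "0 < \<beta>1" "\<beta>1 < 1" and beta2: "0 < \<beta>2" "\<beta>2 < 1" and theta: "\<theta> > 0"
    and alpha_pos: "\<And>k. k \<in> {1..K} \<Longrightarrow> \<alpha> k > 0"
    and alpha_mono: "\<And>k k'. k \<in> {1..K} \<Longrightarrow> k' \<in> {1..K} \<Longrightarrow> k \<le> k' \<Longrightarrow> \<alpha> k' \<le> \<alpha> k"
    and rho_pos: "\<And>k. k \<in> {1..K} \<Longrightarrow> \<rho> k > 0"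
    and rho_mono: "\<And>k k'. k \<in> {1..K} \<Longrightarrow> k' \<in> {1..K} \<Longrightarrow> k \<le> k' \<Longrightarrow> \<rho> k' \<le> \<rho> k"
    and x1: "x1 \<in> X" and z1: "z1 \<in> Z"
    and x_init: "\<And>\<omega>. \<omega> \<in> space M \<Longrightarrow> x 1 \<omega> = x1"
    and z_init: "\<And>\<omega>. \<omega> \<in> space M \<Longrightarrow> z 1 \<omega> = z1"
    and x_meas: "\<And>k. x k \<in> borel_measurable M"
    and z_meas: "\<And>k. z k \<in> borel_measurable M"
    and u_meas: "\<And>k. u k \<in> borel_measurable M"
    and w_meas: "\<And>k. w k \<in> borel_measurable M"
    and x_step: "\<And>k \<omega>. k \<in> {1..K} \<Longrightarrow> \<omega> \<in> space M \<Longrightarrow>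
       is_wproj X (\<chi> i. sqrt (avhat \<beta>2 \<theta> (\<lambda>j. u j \<omega>) k $ i))
         (x k \<omega> - \<alpha> k *\<^sub>R (\<chi> i. amom \<beta>1 (\<lambda>j. u j \<omega>) k $ i / sqrt (avhat \<beta>2 \<theta> (\<lambda>j. u j \<omega>) k $ i)))
         (x (Suc k) \<omega>)"
    and z_step: "\<And>k \<omega>. k \<in> {1..K} \<Longrightarrow> \<omega> \<in> space M \<Longrightarrow>
       is_wproj Z (\<chi> i. sqrt (avhat \<beta>2 \<theta> (\<lambda>j. w j \<omega>) k $ i))
         (z k \<omega> + \<rho> k *\<^sub>R (\<chi> i. amom \<beta>1 (\<lambda>j. w j \<omega>) k $ i / sqrt (avhat \<beta>2 \<theta> (\<lambda>j. w j \<omega>) k $ i)))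
         (z (Suc k) \<omega>)"
    and B1x: "\<And>a b i. a \<in> X \<Longrightarrow> b \<in> X \<Longrightarrow> \<bar>a $ i - b $ i\<bar> \<le> Bx"
    and B1z: "\<And>a b i. a \<in> Z \<Longrightarrow> b \<in> Z \<Longrightarrow> \<bar>a $ i - b $ i\<bar> \<le> Bz"
    and B2u: "\<And>k. k \<in> {1..K} \<Longrightarrow>
       AE \<omega> in M. (\<chi> i. real_cond_exp M (hist_alg M x z k) (\<lambda>\<omega>'. u k \<omega>' $ i) \<omega>)
                     \<in> subdiff_x X L (x k \<omega>) (z k \<omega>)"
    and B2u_mom: "\<And>k. k \<in> {1..K} \<Longrightarrow> (\<integral>\<^sup>+ \<omega>. ennreal ((norm (u k \<omega>))^2) \<partial>M) \<le> ennreal (Mx^2)"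
    and B2w: "\<And>k. k \<in> {1..K} \<Longrightarrow>
       AE \<omega> in M. (\<chi> i. real_cond_exp M (hist_alg M x z k) (\<lambda>\<omega>'. w k \<omega>' $ i) \<omega>)
                     \<in> superdiff_z Z L (x k \<omega>) (z k \<omega>)"
    and B2w_mom: "\<And>k. k \<in> {1..K} \<Longrightarrow> (\<integral>\<^sup>+ \<omega>. ennreal ((norm (w k \<omega>))^2) \<partial>M) \<le> ennreal (Mz^2)"
    and t: "t \<in> {1..K}" and xx: "xx \<in> X" and zz: "zz \<in> Z"
  shows "(1 - \<beta>1) * (\<Sum>j=1..t. (\<integral>\<omega>. (x j \<omega> - xx) \<bullet> u j \<omega> \<partial>M) * (\<Sum>k=j..t. \<alpha> k * \<beta>1 ^ (k - j)))
           \<le> real CARD('n) * \<theta> * Bx^2 / 2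
              + sqrt (real CARD('n)) * (\<theta>^2 + Mx^2) * (\<Sum>j=1..t. (\<alpha> j)^2)
                / (2 * (1 - \<beta>1)^2 * sqrt (1 - \<beta>2) * \<theta>)
       \<and> (1 - \<beta>1) * (\<Sum>j=1..t. (\<integral>\<omega>. (z j \<omega> - zz) \<bullet> w j \<omega> \<partial>M) * (\<Sum>k=j..t. \<rho> k * \<beta>1 ^ (k - j)))
           \<ge> - (real CARD('m) * \<theta> * Bz^2 / 2)
              - sqrt (real CARD('m)) * (\<theta>^2 + Mz^2) * (\<Sum>j=1..t. (\<rho> j)^2)
                / (2 * (1 - \<beta>1)^2 * sqrt (1 - \<beta>2) * \<theta>)"
proof -
  have x_path: "apriad_path X \<beta>1 \<beta>2 \<theta> Bx \<alpha> K (\<lambda>j. u j \<omega>) (\<lambda>j. x j \<omega>) xx"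
    if "\<omega> \<in> space M" for \<omega>
    using X(2) beta1 beta2 theta alpha_pos alpha_mono x1 x_init x_step B1x xx that
    by unfold_locales auto
  have z_path: "apriad_path Z \<beta>1 \<beta>2 \<theta> Bz \<rho> K (\<lambda>j. - w j \<omega>) (\<lambda>j. z j \<omega>) zz"
    if "\<omega> \<in> space M" for \<omega>
    using Z(2) beta1 beta2 theta rho_pos rho_mono z1 z_init z_step B1z zz that
    by unfold_locales (auto intro: ascent_step_is_descent_step_uminus)
  have "t \<le> K" using t by simp
  have "(1 - \<beta>1) * (\<Sum>j=1..t. (\<integral>\<omega>. (z j \<omega> - zz) \<bullet> - w j \<omega> \<partial>M) * (\<Sum>k=j..t. \<rho> k * \<beta>1 ^ (k - j)))
    \<le> CARD('m) * \<theta> * Bz\<^sup>2 / 2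
       + sqrt CARD('m) * (\<theta>\<^sup>2 + Mz\<^sup>2) * (\<Sum>j=1..t. (\<rho> j)\<^sup>2) / (2 * (1 - \<beta>1)\<^sup>2 * sqrt (1 - \<beta>2) * \<theta>)"
    by (rule expected_weighted_regret_bound[OF prob z_path z_meas _ _ \<open>t \<le> K\<close>])
      (use w_meas B2w_mom in auto)
  moreover have "(1 - \<beta>1) * (\<Sum>j=1..t. (\<integral>\<omega>. (x j \<omega> - xx) \<bullet> u j \<omega> \<partial>M) * (\<Sum>k=j..t. \<alpha> k * \<beta>1 ^ (k - j)))
    \<le> CARD('n) * \<theta> * Bx\<^sup>2 / 2
       + sqrt CARD('n) * (\<theta>\<^sup>2 + Mx\<^sup>2) * (\<Sum>j=1..t. (\<alpha> j)\<^sup>2) / (2 * (1 - \<beta>1)\<^sup>2 * sqrt (1 - \<beta>2) * \<theta>)"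
    by (rule expected_weighted_regret_bound[OF prob x_path x_meas u_meas B2u_mom \<open>t \<le> K\<close>])
  ultimately show ?thesis by (simp add: sum_negf)
qed

end
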